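(* Let $F$ be a $C^1$-closed smooth curve in the Euclidean plane parametrized by arc length $t\in[0,T]$ with signed curvature $k(t)$, and let $G\subset H^2$ be its development, i.e. a curve in the hyperbolic plane parametrized by arc length $t\in[0,T]$ whose signed geodesic curvature is $k(t)$. Then $G$ is $C^1$-closed if and only if the bicycle monodromy $M_F$ for the bicycle of length $\ell=1$ is the identity.
   Context: A differentiable curve is $C^1$-closed if its endpoints coincide and its oriented tangent lines at the endpoints coincide. The development $G$ is unique up to orientation-preserving isometry of $H^2$ (the hyperbolic plane of curvature $-1$). Bicycle model: a segment $RF$ of fixed length $\ell$ moves in the plane with the velocity of the rear end $R$ always parallel to $RF$; the bicycle monodromy $M_F$ is the self-map of the circle of radius $\ell$ sending the initial position of $R$ relative to the front end (moving along $F$) to its terminal position. *)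

theory Defs
  imports "HOL-Analysis.Analysis"
begin

definition smooth_curve :: "real \<Rightarrow> (real \<Rightarrow> 'a::real_normed_vector) \<Rightarrow> bool" where
  "smooth_curve T c \<longleftrightarrow> (\<exists>D. D 0 = c \<and>
     (\<forall>n. \<forall>t\<in>{0..T}. (D n has_vector_derivative D (Suc n) t) (at t within {0..T})))"

definition deriv1 :: "real \<Rightarrow> (real \<Rightarrow> 'a::real_normed_vector) \<Rightarrow> real \<Rightarrow> 'a" where
  "deriv1 T c t = vector_derivative c (at t within {0..T})"

definition deriv2 :: "real \<Rightarrow> (real \<Rightarrow> 'a::real_normed_vector) \<Rightarrow> real \<Rightarrow> 'a" where
  "deriv2 T c t = vector_derivative (deriv1 T c) (at t within {0..T})"

text \<open>C1-closed: endpoints coincide and the oriented tangent lines coincide; for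
 curves parametrized by arc length (unit speed) this is equality of velocities.\<close>
definition C1_closed :: "real \<Rightarrow> (real \<Rightarrow> 'a::real_normed_vector) \<Rightarrow> bool" where
  "C1_closed T c \<longleftrightarrow> c 0 = c T \<and> deriv1 T c 0 = deriv1 T c T"

definition det2 :: "real^2 \<Rightarrow> real^2 \<Rightarrow> real" where
  "det2 a b = a$1 * b$2 - a$2 * b$1"

definition signed_curvature :: "real \<Rightarrow> (real \<Rightarrow> real^2) \<Rightarrow> real \<Rightarrow> real" where
  "signed_curvature T F t = det2 (deriv1 T F t) (deriv2 T F t)"

definition mink :: "real^3 \<Rightarrow> real^3 \<Rightarrow> real" where
  "mink x y = x$1 * y$1 + x$2 * y$2 - x$3 * y$3"

definition H2 :: "(real^3) set" where
  "H2 = {x. mink x x = -1 \<and> x$3 > 0}"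

text \<open>Lorentzian cross product: mink (lcross a b) c = det [a;b;c].\<close>
definition lcross :: "real^3 \<Rightarrow> real^3 \<Rightarrow> real^3" where
  "lcross a b = vector [a$2 * b$3 - a$3 * b$2, a$3 * b$1 - a$1 * b$3,
                        -(a$1 * b$2 - a$2 * b$1)]"

text \<open>Covariant acceleration: orthogonal projection of the ambient acceleration to
 the tangent plane T_{G t} H2, i.e. v + mink v G * G.\<close>
definition cov_accel :: "real \<Rightarrow> (real \<Rightarrow> real^3) \<Rightarrow> real \<Rightarrow> real^3" where
  "cov_accel T G t = deriv2 T G t + mink (deriv2 T G t) (G t) *\<^sub>R G t"

text \<open>Signed geodesic curvature of a unit-speed curve in H2: component of the
 covariant acceleration along the positively rotated unit normal G x_L G'.\<close>
definition geodesic_curvature :: "real \<Rightarrow> (real \<Rightarrow> real^3) \<Rightarrow> real \<Rightarrow> real" where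
  "geodesic_curvature T G t = mink (cov_accel T G t) (lcross (G t) (deriv1 T G t))"

definition bicycle_rear :: "(real \<Rightarrow> real^2) \<Rightarrow> real \<Rightarrow> real \<Rightarrow> (real \<Rightarrow> real^2) \<Rightarrow> bool" where
  "bicycle_rear F l T R \<longleftrightarrow>
     (\<forall>t\<in>{0..T}. norm (F t - R t) = l \<and>
        (\<exists>v c. (R has_vector_derivative v) (at t within {0..T}) \<and> v = c *\<^sub>R (F t - R t)))"

definition bicycle_monodromy :: "(real \<Rightarrow> real^2) \<Rightarrow> real \<Rightarrow> real \<Rightarrow> real^2 \<Rightarrow> real^2" where
  "bicycle_monodromy F l T p =
     (THE q. \<exists>R. bicycle_rear F l T R \<and> R 0 - F 0 = p \<and> R T - F T = q)"

end

theory Submission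
  imports Defs
begin

text \<open>
  Write the offset of the rear wheel as \<open>R - F = v\<^sub>1 F' + v\<^sub>2 J F'\<close> in the moving frame of \<open>F\<close>
  (\<open>J\<close> the rotation by a right angle). The bicycle constraint becomes the Riccati system
  \<open>v\<^sub>1' = v\<^sub>1\<^sup>2 - 1 + k v\<^sub>2\<close>, \<open>v\<^sub>2' = v\<^sub>1 v\<^sub>2 - k v\<^sub>1\<close>, and the very same system says that the null
  vector \<open>G + v\<^sub>1 G' + v\<^sub>2 N\<close>, built from the Frenet frame \<open>(G, G', N)\<close> of the development in
  the hyperboloid model, only changes by a scalar factor along the curve. So unit offsets at time
  \<open>t\<close> correspond to ideal points of \<open>H\<^sup>2\<close>, and the monodromy becomes the action on ideal points of
  the Lorentz transformation carrying the frame of \<open>G\<close> at \<open>T\<close> back to the frame at \<open>0\<close> (here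
  the tangents of \<open>F\<close> at the endpoints coincide). That transformation fixes every ideal point iff
  it is the identity, already because it fixes the four ideal points \<open>G \<plusminus> G'\<close>, \<open>G \<plusminus> N\<close>;
  and it is the identity iff \<open>G\<close> is \<open>C\<^sup>1\<close>-closed.
\<close>

section \<open>Calculus on an interval\<close>

lemma has_vector_derivative_zero_of_constant_on_Icc:
  assumes "a < b" "x \<in> {a..b}" "(f has_vector_derivative d) (at x within {a..b})"
    and "\<And>s. s \<in> {a..b} \<Longrightarrow> f s = c"
  shows "d = 0"
proof -
  have "(f has_vector_derivative 0) (at x within {a..b})"
    by (rule has_vector_derivative_transform[OF assms(2) _ has_vector_derivative_const])
      (use assms(4) in auto)
  with assms(1-3) show ?thesis
    by (metis box_real(2) vector_derivative_unique_within_closed_interval)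
qed

lemma linear_ode_solution_vanishes:
  fixes w :: "real \<Rightarrow> 'a::real_inner"
  assumes "0 \<le> T"
    and deriv: "\<And>t. t \<in> {0..T} \<Longrightarrow> (w has_vector_derivative c t *\<^sub>R w t) (at t within {0..T})"
    and bound: "\<And>t. t \<in> {0..T} \<Longrightarrow> c t \<le> C"
    and "w 0 = 0"
  shows "w T = 0"
proof -
  define f where "f t = exp (- 2 * C * t) * inner (w t) (w t)" for t
  have f_deriv: "(f has_real_derivative 2 * exp (- 2 * C * t) * (c t - C) * inner (w t) (w t))
      (at t within {0..T})" if t: "t \<in> {0..T}" for t
  proof -
    have "((\<lambda>s. inner (w s) (w s)) has_real_derivative 2 * c t * inner (w t) (w t)) (at t within {0..T})"
      using bounded_bilinear.has_vector_derivative[OF bounded_bilinear_inner deriv[OF t] deriv[OF t]]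
      by (simp add: has_real_derivative_iff_has_vector_derivative algebra_simps)
    then show ?thesis
      unfolding f_def by (auto intro!: derivative_eq_intros simp: algebra_simps)
  qed
  have "f T \<le> f 0"
  proof (rule DERIV_nonpos_imp_decreasing_open[OF \<open>0 \<le> T\<close>])
    show "continuous_on {0..T} f"
      using f_deriv by (meson DERIV_continuous continuous_on_eq_continuous_within)
    fix t assume t: "0 < t" "t < T"
    have "(f has_real_derivative 2 * exp (- 2 * C * t) * (c t - C) * inner (w t) (w t)) (at t)"
      using f_deriv[of t] t at_within_Icc_at[OF t] by simp
    moreover have "2 * exp (- 2 * C * t) * (c t - C) * inner (w t) (w t) \<le> 0"
      using bound[of t] t by (simp add: mult_nonneg_nonpos mult_nonpos_nonneg)
    ultimately show "\<exists>y. (f has_real_derivative y) (at t) \<and> y \<le> 0" by blast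
  qed
  then have "inner (w T) (w T) \<le> 0"
    using \<open>w 0 = 0\<close> by (simp add: f_def mult_le_0_iff)
  then show ?thesis
    by (metis inner_eq_zero_iff inner_ge_zero order_antisym)
qed

lemma linear_ode_solution_parallel:
  fixes x :: "real \<Rightarrow> 'a::real_inner"
  assumes "0 \<le> T"
    and deriv: "\<And>t. t \<in> {0..T} \<Longrightarrow> (x has_vector_derivative c t *\<^sub>R x t) (at t within {0..T})"
    and "\<And>t. t \<in> {0..T} \<Longrightarrow> c t \<le> C"
  shows "\<exists>\<mu>. x T = \<mu> *\<^sub>R x 0"
proof -
  \<comment> \<open>\<open>P \<circ> x\<close> solves the same equation and starts at \<open>0\<close>, also for \<open>x 0 = 0\<close> as \<open>inverse 0 = 0\<close>.\<close>
  define P where "P v = v - (inverse (inner (x 0) (x 0)) * inner v (x 0)) *\<^sub>R x 0" for v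
  have "bounded_linear P"
    unfolding P_def by (intro bounded_linear_intros)
  then have "((P \<circ> x) has_vector_derivative c t *\<^sub>R (P \<circ> x) t) (at t within {0..T})"
    if "t \<in> {0..T}" for t
    using bounded_linear.has_vector_derivative[OF \<open>bounded_linear P\<close> deriv[OF that]]
    by (simp add: o_def linear_simps \<open>bounded_linear P\<close>)
  moreover have "(P \<circ> x) 0 = 0"
    by (cases "x 0 = 0") (simp_all add: P_def)
  ultimately have "P (x T) = 0"
    using linear_ode_solution_vanishes[OF \<open>0 \<le> T\<close>] assms(3) by (metis comp_apply)
  then show ?thesis
    unfolding P_def by (metis eq_iff_diff_eq_0)
qed

lemma smooth_curve_derivatives:
  fixes c :: "real \<Rightarrow> 'a::euclidean_space"
  assumes "0 < T" "smooth_curve T c"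
  obtains c' c'' where
    "\<And>t. t \<in> {0..T} \<Longrightarrow> (c has_vector_derivative c' t) (at t within {0..T})"
    "\<And>t. t \<in> {0..T} \<Longrightarrow> (c' has_vector_derivative c'' t) (at t within {0..T})"
    "\<And>t. t \<in> {0..T} \<Longrightarrow> deriv1 T c t = c' t"
    "\<And>t. t \<in> {0..T} \<Longrightarrow> deriv2 T c t = c'' t"
proof -
  obtain D where "D 0 = c"
    and D: "\<And>n t. t \<in> {0..T} \<Longrightarrow> (D n has_vector_derivative D (Suc n) t) (at t within {0..T})"
    using assms(2) unfolding smooth_curve_def by blast
  have deriv1: "deriv1 T c t = D 1 t" if "t \<in> {0..T}" for t
    using vector_derivative_within_closed_interval[OF assms(1) that D[of t 0]] that
    by (simp add: deriv1_def \<open>D 0 = c\<close>)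
  have deriv1_deriv: "(deriv1 T c has_vector_derivative D 2 t) (at t within {0..T})" if "t \<in> {0..T}" for t
    using has_vector_derivative_transform[OF that _ D[of t 1]] that deriv1 by (simp add: numeral_2_eq_2)
  then have "deriv2 T c t = D 2 t" if "t \<in> {0..T}" for t
    using vector_derivative_within_closed_interval[OF assms(1) that deriv1_deriv[OF that]]
    by (simp add: deriv2_def)
  then show ?thesis
    using that[of "D 1" "D 2"] D[of _ 0] D[of _ 1] deriv1 \<open>D 0 = c\<close> by (simp add: numeral_2_eq_2)
qed

section \<open>Minkowski space\<close>

interpretation mink: bounded_bilinear mink
  unfolding bilinear_conv_bounded_bilinear[symmetric] bilinear_def linear_iff
  by (simp add: mink_def algebra_simps)

interpretation lcross: bounded_bilinear lcross
  unfolding bilinear_conv_bounded_bilinear[symmetric] bilinear_def linear_iff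
  by (simp add: lcross_def vec_eq_iff forall_3 algebra_simps)

lemma mink_commute: "mink x y = mink y x"
  by (simp add: mink_def algebra_simps)

lemma lcross_self [simp]: "lcross a a = 0"
  by (simp add: lcross_def vec_eq_iff forall_3 algebra_simps)

lemma mink_lcross_left [simp]: "mink a (lcross a b) = 0" "mink b (lcross a b) = 0"
  by (simp_all add: mink_def lcross_def algebra_simps)

lemma mink_lcross_right [simp]: "mink (lcross a b) a = 0" "mink (lcross a b) b = 0"
  by (simp_all add: mink_def lcross_def algebra_simps)

definition lorentz_frame :: "real^3 \<Rightarrow> real^3 \<Rightarrow> bool" where
  "lorentz_frame a b \<longleftrightarrow> mink a a = -1 \<and> mink b b = 1 \<and> mink a b = 0"

lemma lorentz_frame_lcross_unit:
  assumes "lorentz_frame a b"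
  shows "mink (lcross a b) (lcross a b) = 1"
  using assms unfolding lorentz_frame_def mink_def lcross_def
  by (simp add: vector_def) algebra

lemma lorentz_frame_combination:
  fixes x y :: real
  assumes "lorentz_frame a b"
  defines "w \<equiv> a + x *\<^sub>R b + y *\<^sub>R lcross a b"
  shows "mink w a = -1" "mink w b = x" "mink w (lcross a b) = y" "mink w w = -1 + x\<^sup>2 + y\<^sup>2"
  using assms lorentz_frame_lcross_unit[OF assms(1)] mink_commute[of a b]
  by (simp_all add: lorentz_frame_def mink.add_left mink.add_right mink.scaleR_left mink.scaleR_right
      power2_eq_square)

lemma lorentz_frame_expansion:
  assumes "lorentz_frame a b"
  shows "v = (- mink v a) *\<^sub>R a + mink v b *\<^sub>R b + mink v (lcross a b) *\<^sub>R lcross a b"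
  using assms unfolding lorentz_frame_def mink_def lcross_def
  by (simp add: vec_eq_iff forall_3 vector_def) algebra

lemma lorentz_frame_mink_self:
  assumes "lorentz_frame a b"
  shows "mink v v = - (mink v a)\<^sup>2 + (mink v b)\<^sup>2 + (mink v (lcross a b))\<^sup>2"
  using assms unfolding lorentz_frame_def mink_def lcross_def
  by (simp add: vector_def power2_eq_square) algebra

lemma lcross_lcross_timelike:
  assumes "mink a a = -1" "mink a b = 0"
  shows "lcross a (lcross a b) = - b"
  using assms unfolding mink_def lcross_def
  by (simp add: vec_eq_iff forall_3 vector_def) algebra

lemma mink_null_timelike_nonzero:
  assumes "mink x x = 0" "x \<noteq> 0" "mink g g = -1"
  shows "mink x g \<noteq> 0"
proof
  assume "mink x g = 0"
  with assms(1,3) have "(x$3)\<^sup>2 = - (x$1 * g$2 - x$2 * g$1)\<^sup>2"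
    unfolding mink_def power2_eq_square by algebra
  then have "x$3 = 0"
    by (smt (verit) zero_le_power2 zero_eq_power2)
  with assms(1) have "x$1 = 0" "x$2 = 0"
    by (auto simp: mink_def add_nonneg_eq_0_iff)
  with \<open>x$3 = 0\<close> assms(2) show False
    by (simp add: vec_eq_iff forall_3)
qed

lemma lorentz_frame_eq_of_null_directions:
  assumes frame: "lorentz_frame a b" and "mink x x = -1" "x$3 > 0" "a$3 > 0"
    and e1: "x + y = m1 *\<^sub>R (a + b)" and e2: "x - y = m2 *\<^sub>R (a - b)"
    and e3: "x + z = m3 *\<^sub>R (a + lcross a b)" and e4: "x - z = m4 *\<^sub>R (a - lcross a b)"
  shows "x = a \<and> y = b"
proof -
  have two_x: "2 *\<^sub>R x = (m1 + m2) *\<^sub>R a + (m1 - m2) *\<^sub>R b"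
    using arg_cong2[OF e1 e2, of "(+)"] by (simp add: algebra_simps scaleR_2)
  moreover have "2 *\<^sub>R x = (m3 + m4) *\<^sub>R a + (m3 - m4) *\<^sub>R lcross a b"
    using arg_cong2[OF e3 e4, of "(+)"] by (simp add: algebra_simps scaleR_2)
  ultimately have "mink ((m1 + m2) *\<^sub>R a + (m1 - m2) *\<^sub>R b) b
      = mink ((m3 + m4) *\<^sub>R a + (m3 - m4) *\<^sub>R lcross a b) b"
    by simp
  then have "m2 = m1"
    using frame mink_lcross_left(2)[of b a] mink_commute[of b a] mink_commute[of b "lcross a b"]
    by (simp add: lorentz_frame_def mink.add_left mink.scaleR_left)
  with two_x have "2 *\<^sub>R x = 2 *\<^sub>R (m1 *\<^sub>R a)"
    by (simp add: scaleR_2)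
  then have x: "x = m1 *\<^sub>R a"
    by (subst (asm) scaleR_cancel_left) simp
  then have y: "y = m1 *\<^sub>R b"
    using e1 by (simp add: scaleR_add_right)
  have "m1 * m1 = 1"
    using \<open>mink x x = -1\<close> frame by (simp add: x lorentz_frame_def mink.scaleR_left mink.scaleR_right)
  moreover have "m1 > 0"
    using \<open>x$3 > 0\<close> \<open>a$3 > 0\<close> by (simp add: x zero_less_mult_iff)
  ultimately have "m1 = 1"
    by (metis abs_of_pos abs_square_eq_1 power2_eq_square)
  then show ?thesis
    using x y by simp
qed

section \<open>The Euclidean plane\<close>

definition rot90 :: "real^2 \<Rightarrow> real^2" where
  "rot90 a = vector [- a$2, a$1]"

lemma bounded_linear_rot90: "bounded_linear rot90"
  unfolding linear_conv_bounded_linear[symmetric] linear_iff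
  by (simp add: rot90_def vec_eq_iff forall_2)

lemma inner_vec2: "inner a b = a$1 * b$1 + a$2 * b$2" for a b :: "real^2"
  by (simp add: inner_vec_def sum_2)

lemma rot90_scaleR [simp]: "rot90 (c *\<^sub>R a) = c *\<^sub>R rot90 a"
  by (simp add: rot90_def vec_eq_iff forall_2)

lemma rot90_rot90 [simp]: "rot90 (rot90 a) = - a"
  by (simp add: rot90_def vec_eq_iff forall_2)

lemma inner_rot90_self [simp]: "inner a (rot90 a) = 0" "inner (rot90 a) a = 0"
  by (simp_all add: inner_vec2 rot90_def)

lemma inner_rot90_rot90 [simp]: "inner (rot90 a) (rot90 b) = inner a b"
  by (simp add: inner_vec2 rot90_def)

lemma det2_eq_inner_rot90: "det2 a b = inner (rot90 a) b"
  by (simp add: inner_vec2 rot90_def det2_def)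

lemma unit_frame_expansion:
  assumes "inner a a = 1"
  shows "b = inner b a *\<^sub>R a + inner b (rot90 a) *\<^sub>R rot90 a"
  using assms unfolding inner_vec2 rot90_def
  by (simp add: vec_eq_iff forall_2) algebra

lemma unit_frame_inner_self:
  assumes "inner a a = 1"
  shows "inner b b = (inner b a)\<^sup>2 + (inner b (rot90 a))\<^sup>2"
  using assms unfolding inner_vec2 rot90_def
  by (simp add: power2_eq_square) algebra

section \<open>A plane curve and its development\<close>

locale development =
  fixes T :: real and F F' F'' :: "real \<Rightarrow> real^2" and G G' G'' :: "real \<Rightarrow> real^3"
  assumes T_pos: "0 < T"
    and F_deriv: "\<And>t. t \<in> {0..T} \<Longrightarrow> (F has_vector_derivative F' t) (at t within {0..T})"
    and F'_deriv: "\<And>t. t \<in> {0..T} \<Longrightarrow> (F' has_vector_derivative F'' t) (at t within {0..T})"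
    and G_deriv: "\<And>t. t \<in> {0..T} \<Longrightarrow> (G has_vector_derivative G' t) (at t within {0..T})"
    and G'_deriv: "\<And>t. t \<in> {0..T} \<Longrightarrow> (G' has_vector_derivative G'' t) (at t within {0..T})"
    and F'_unit: "\<And>t. t \<in> {0..T} \<Longrightarrow> inner (F' t) (F' t) = 1"
    and G_in_H2: "\<And>t. t \<in> {0..T} \<Longrightarrow> G t \<in> H2"
    and G'_unit: "\<And>t. t \<in> {0..T} \<Longrightarrow> mink (G' t) (G' t) = 1"
    and curvature_eq: "\<And>t. t \<in> {0..T} \<Longrightarrow>
      mink (G'' t + mink (G'' t) (G t) *\<^sub>R G t) (lcross (G t) (G' t)) = det2 (F' t) (F'' t)"
begin

definition normal :: "real \<Rightarrow> real^3" where
  "normal t = lcross (G t) (G' t)"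

definition kappa :: "real \<Rightarrow> real" where
  "kappa t = det2 (F' t) (F'' t)"

lemma endpoints_in_domain: "0 \<in> {0..T}" "T \<in> {0..T}"
  using T_pos by auto

lemma mink_G_G: "t \<in> {0..T} \<Longrightarrow> mink (G t) (G t) = -1"
  using G_in_H2 by (simp add: H2_def)

lemma mink_deriv_sum_eq_0_of_constant:
  assumes t: "t \<in> {0..T}"
    and "\<And>s. s \<in> {0..T} \<Longrightarrow> (x has_vector_derivative x' s) (at s within {0..T})"
    and "\<And>s. s \<in> {0..T} \<Longrightarrow> (y has_vector_derivative y' s) (at s within {0..T})"
    and "\<And>s. s \<in> {0..T} \<Longrightarrow> mink (x s) (y s) = c"
  shows "mink (x t) (y' t) + mink (x' t) (y t) = 0"
  using has_vector_derivative_zero_of_constant_on_Icc[OF T_pos t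
      mink.has_vector_derivative[OF assms(2,3)[OF t]]] assms(4) by blast

lemma mink_G_G': "t \<in> {0..T} \<Longrightarrow> mink (G t) (G' t) = 0"
  using mink_deriv_sum_eq_0_of_constant[OF _ G_deriv G_deriv mink_G_G] by (simp add: mink_commute)

lemma mink_G'_G'': "t \<in> {0..T} \<Longrightarrow> mink (G' t) (G'' t) = 0"
  using mink_deriv_sum_eq_0_of_constant[OF _ G'_deriv G'_deriv G'_unit] by (simp add: mink_commute)

lemma mink_G_G'': "t \<in> {0..T} \<Longrightarrow> mink (G t) (G'' t) = -1"
  using mink_deriv_sum_eq_0_of_constant[OF _ G_deriv G'_deriv mink_G_G', of t] G'_unit[of t] by simp

lemma lorentz_frame_G: "t \<in> {0..T} \<Longrightarrow> lorentz_frame (G t) (G' t)"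
  by (simp add: lorentz_frame_def mink_G_G G'_unit mink_G_G')

lemma G''_eq:
  assumes t: "t \<in> {0..T}"
  shows "G'' t = G t + kappa t *\<^sub>R normal t"
proof -
  have "G'' t + mink (G'' t) (G t) *\<^sub>R G t = G'' t - G t"
    using mink_G_G''[OF t] by (simp add: mink_commute)
  then have "mink (G'' t) (normal t) = kappa t"
    using curvature_eq[OF t] by (simp add: normal_def kappa_def mink.diff_left)
  then show ?thesis
    using lorentz_frame_expansion[OF lorentz_frame_G[OF t], of "G'' t"]
      mink_G_G''[OF t] mink_G'_G''[OF t]
    by (simp add: normal_def mink_commute[of "G'' t"])
qed

lemma normal_deriv:
  assumes t: "t \<in> {0..T}"
  shows "(normal has_vector_derivative (- kappa t) *\<^sub>R G' t) (at t within {0..T})"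
proof -
  have "(normal has_vector_derivative lcross (G t) (G'' t) + lcross (G' t) (G' t)) (at t within {0..T})"
    unfolding normal_def[abs_def] by (rule lcross.has_vector_derivative[OF G_deriv[OF t] G'_deriv[OF t]])
  moreover have "lcross (G t) (G'' t) = (- kappa t) *\<^sub>R G' t"
    using lcross_lcross_timelike[OF mink_G_G[OF t] mink_G_G'[OF t]]
    by (simp add: G''_eq[OF t] normal_def lcross.add_right lcross.scaleR_right)
  ultimately show ?thesis by simp
qed

lemma F''_eq:
  assumes t: "t \<in> {0..T}"
  shows "F'' t = kappa t *\<^sub>R rot90 (F' t)"
proof -
  have "inner (F'' t) (F' t) = 0"
    using has_vector_derivative_zero_of_constant_on_Icc[OF T_pos t
      bounded_bilinear.has_vector_derivative[OF bounded_bilinear_inner F'_deriv[OF t] F'_deriv[OF t]]] F'_unit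
    by (simp add: inner_commute)
  then show ?thesis
    using unit_frame_expansion[OF F'_unit[OF t], of "F'' t"]
    by (simp add: kappa_def det2_eq_inner_rot90 inner_commute)
qed

text \<open>The equation satisfied by the coordinates \<open>(v1, v2)\<close> of a rear wheel offset \<open>R - F\<close> in the
  moving frame \<open>(F', rot90 F')\<close>.\<close>

definition bicycle_equation :: "(real \<Rightarrow> real) \<Rightarrow> (real \<Rightarrow> real) \<Rightarrow> bool" where
  "bicycle_equation v1 v2 \<longleftrightarrow> (\<forall>t\<in>{0..T}.
     (v1 has_real_derivative v1 t * v1 t - 1 + kappa t * v2 t) (at t within {0..T}) \<and>
     (v2 has_real_derivative v1 t * v2 t - kappa t * v1 t) (at t within {0..T}))"

lemma rear_track_bicycle_equation:
  assumes "bicycle_rear F 1 T R"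
  shows "bicycle_equation (\<lambda>s. inner (R s - F s) (F' s)) (\<lambda>s. inner (R s - F s) (rot90 (F' s)))"
  unfolding bicycle_equation_def
proof (intro ballI conjI)
  fix t assume t: "t \<in> {0..T}"
  define d where "d s = R s - F s" for s
  define u1 where "u1 = inner (d t) (F' t)"
  define u2 where "u2 = inner (d t) (rot90 (F' t))"
  obtain c where "(R has_vector_derivative c *\<^sub>R (F t - R t)) (at t within {0..T})"
    using assms t unfolding bicycle_rear_def by blast
  then have "((\<lambda>s. R s - F s) has_vector_derivative c *\<^sub>R (F t - R t) - F' t) (at t within {0..T})"
    by (rule has_vector_derivative_diff[OF _ F_deriv[OF t]])
  then have d_deriv_c: "(d has_vector_derivative (- c) *\<^sub>R d t - F' t) (at t within {0..T})"
    unfolding d_def[abs_def] by (simp add: algebra_simps)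
  have d_unit: "inner (d s) (d s) = 1" if "s \<in> {0..T}" for s
    using assms that unfolding bicycle_rear_def d_def
    by (metis norm_eq_1 norm_minus_commute)
  have "inner (d t) ((- c) *\<^sub>R d t - F' t) + inner ((- c) *\<^sub>R d t - F' t) (d t) = 0"
    by (rule has_vector_derivative_zero_of_constant_on_Icc[OF T_pos t
        bounded_bilinear.has_vector_derivative[OF bounded_bilinear_inner d_deriv_c d_deriv_c]])
      (use d_unit in auto)
  then have "c = - u1"
    using d_unit[OF t] by (simp add: u1_def inner_diff inner_commute)
  then have d_deriv: "(d has_vector_derivative u1 *\<^sub>R d t - F' t) (at t within {0..T})"
    using d_deriv_c by simp
  show "((\<lambda>s. inner (R s - F s) (F' s)) has_real_derivative
      u1 * u1 - 1 + kappa t * u2) (at t within {0..T})"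
  proof -
    have "((\<lambda>s. inner (d s) (F' s)) has_vector_derivative
        inner (d t) (F'' t) + inner (u1 *\<^sub>R d t - F' t) (F' t)) (at t within {0..T})"
      by (rule bounded_bilinear.has_vector_derivative[OF bounded_bilinear_inner d_deriv F'_deriv[OF t]])
    then show ?thesis
      using F'_unit[OF t]
      by (simp add: has_real_derivative_iff_has_vector_derivative d_def u1_def u2_def F''_eq[OF t]
          inner_diff_left algebra_simps)
  qed
  show "((\<lambda>s. inner (R s - F s) (rot90 (F' s))) has_real_derivative
      u1 * u2 - kappa t * u1) (at t within {0..T})"
  proof -
    have "((\<lambda>s. inner (d s) (rot90 (F' s))) has_vector_derivative
        inner (d t) (rot90 (F'' t)) + inner (u1 *\<^sub>R d t - F' t) (rot90 (F' t))) (at t within {0..T})"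
      by (rule bounded_bilinear.has_vector_derivative[OF bounded_bilinear_inner d_deriv
          bounded_linear.has_vector_derivative[OF bounded_linear_rot90 F'_deriv[OF t]]])
    then show ?thesis
      by (simp add: has_real_derivative_iff_has_vector_derivative d_def u1_def u2_def F''_eq[OF t]
          inner_diff_left algebra_simps)
  qed
qed

lemma bicycle_equation_rear_track:
  assumes eq: "bicycle_equation v1 v2" and unit: "\<And>t. t \<in> {0..T} \<Longrightarrow> (v1 t)\<^sup>2 + (v2 t)\<^sup>2 = 1"
  shows "bicycle_rear F 1 T (\<lambda>s. F s + v1 s *\<^sub>R F' s + v2 s *\<^sub>R rot90 (F' s))"
    (is "bicycle_rear F 1 T ?R")
  unfolding bicycle_rear_def
proof (intro ballI conjI)
  fix t assume t: "t \<in> {0..T}"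
  have "inner (?R t - F t) (?R t - F t) = (v1 t)\<^sup>2 + (v2 t)\<^sup>2"
    using F'_unit[OF t] by (simp add: inner_add inner_commute power2_eq_square)
  then show "norm (F t - ?R t) = 1"
    using unit[OF t] by (subst norm_minus_commute) (simp add: norm_eq_sqrt_inner)
  have "(?R has_vector_derivative F' t + (v1 t *\<^sub>R F'' t + (v1 t * v1 t - 1 + kappa t * v2 t) *\<^sub>R F' t)
      + (v2 t *\<^sub>R rot90 (F'' t) + (v1 t * v2 t - kappa t * v1 t) *\<^sub>R rot90 (F' t)))
      (at t within {0..T})"
    using eq t unfolding bicycle_equation_def
    by (intro has_vector_derivative_add has_vector_derivative_scaleR F_deriv F'_deriv
        bounded_linear.has_vector_derivative[OF bounded_linear_rot90]) auto
  moreover have "F' t + (v1 t *\<^sub>R F'' t + (v1 t * v1 t - 1 + kappa t * v2 t) *\<^sub>R F' t)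
      + (v2 t *\<^sub>R rot90 (F'' t) + (v1 t * v2 t - kappa t * v1 t) *\<^sub>R rot90 (F' t))
      = (- v1 t) *\<^sub>R (F t - ?R t)"
    by (simp add: F''_eq[OF t] vec_eq_iff algebra_simps)
  ultimately have "(?R has_vector_derivative (- v1 t) *\<^sub>R (F t - ?R t)) (at t within {0..T})"
    by (rule has_vector_derivative_eq_rhs)
  then show "\<exists>v c. (?R has_vector_derivative v) (at t within {0..T}) \<and> v = c *\<^sub>R (F t - ?R t)"
    by blast
qed

lemma bicycle_equation_frame_combination_scaling:
  assumes "bicycle_equation v1 v2" and t: "t \<in> {0..T}"
  shows "((\<lambda>s. G s + v1 s *\<^sub>R G' s + v2 s *\<^sub>R normal s) has_vector_derivative
      v1 t *\<^sub>R (G t + v1 t *\<^sub>R G' t + v2 t *\<^sub>R normal t)) (at t within {0..T})"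
proof -
  have "((\<lambda>s. G s + v1 s *\<^sub>R G' s + v2 s *\<^sub>R normal s) has_vector_derivative
      G' t + (v1 t *\<^sub>R G'' t + (v1 t * v1 t - 1 + kappa t * v2 t) *\<^sub>R G' t)
      + (v2 t *\<^sub>R ((- kappa t) *\<^sub>R G' t) + (v1 t * v2 t - kappa t * v1 t) *\<^sub>R normal t))
      (at t within {0..T})"
    using assms unfolding bicycle_equation_def
    by (intro has_vector_derivative_add has_vector_derivative_scaleR G_deriv G'_deriv normal_deriv) auto
  then show ?thesis
    by (simp add: G''_eq[OF t] vec_eq_iff algebra_simps)
qed

lemma null_vector_bicycle_equation:
  assumes "mink x x = 0" "x \<noteq> 0"
  shows "bicycle_equation (\<lambda>s. - mink x (G' s) / mink x (G s)) (\<lambda>s. - mink x (normal s) / mink x (G s))"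
    and "t \<in> {0..T} \<Longrightarrow> (- mink x (G' t) / mink x (G t))\<^sup>2 + (- mink x (normal t) / mink x (G t))\<^sup>2 = 1"
proof -
  have nonzero: "mink x (G t) \<noteq> 0" if "t \<in> {0..T}" for t
    using mink_null_timelike_nonzero[OF assms mink_G_G[OF that]] .
  show "(- mink x (G' t) / mink x (G t))\<^sup>2 + (- mink x (normal t) / mink x (G t))\<^sup>2 = 1"
    if t: "t \<in> {0..T}"
    using lorentz_frame_mink_self[OF lorentz_frame_G[OF t], of x] assms(1) nonzero[OF t]
    by (simp add: normal_def power_divide divide_eq_1_iff add_divide_distrib[symmetric])
  show "bicycle_equation (\<lambda>s. - mink x (G' s) / mink x (G s)) (\<lambda>s. - mink x (normal s) / mink x (G s))"
    unfolding bicycle_equation_def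
  proof (intro ballI conjI)
    fix t assume t: "t \<in> {0..T}"
    have mink_const_deriv: "((\<lambda>s. mink x (y s)) has_real_derivative mink x y') (at t within {0..T})"
      if "(y has_vector_derivative y') (at t within {0..T})" for y y'
      using mink.has_vector_derivative[OF has_vector_derivative_const that, of x]
      by (simp add: has_real_derivative_iff_has_vector_derivative mink.zero_left)
    have "mink x (G'' t) = mink x (G t) + kappa t * mink x (normal t)"
      by (simp add: G''_eq[OF t] mink.add_right mink.scaleR_right)
    then have d1: "((\<lambda>s. - mink x (G' s)) has_real_derivative - (mink x (G t) + kappa t * mink x (normal t)))
        (at t within {0..T})"
      using DERIV_minus[OF mink_const_deriv[OF G'_deriv[OF t]]] by simp
    have d2: "((\<lambda>s. - mink x (normal s)) has_real_derivative kappa t * mink x (G' t)) (at t within {0..T})"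
      using DERIV_minus[OF mink_const_deriv[OF normal_deriv[OF t]]]
      by (simp add: mink.minus_right mink.scaleR_right)
    note d0 = mink_const_deriv[OF G_deriv[OF t]]
    show "((\<lambda>s. - mink x (G' s) / mink x (G s)) has_real_derivative
        (- mink x (G' t) / mink x (G t)) * (- mink x (G' t) / mink x (G t)) - 1
        + kappa t * (- mink x (normal t) / mink x (G t))) (at t within {0..T})"
      by (rule DERIV_cong[OF DERIV_divide[OF d1 d0 nonzero[OF t]]])
        (use nonzero[OF t] in \<open>simp add: field_simps\<close>)
    show "((\<lambda>s. - mink x (normal s) / mink x (G s)) has_real_derivative
        (- mink x (G' t) / mink x (G t)) * (- mink x (normal t) / mink x (G t))
        - kappa t * (- mink x (G' t) / mink x (G t))) (at t within {0..T})"
      by (rule DERIV_cong[OF DERIV_divide[OF d2 d0 nonzero[OF t]]])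
        (use nonzero[OF t] in \<open>simp add: field_simps\<close>)
  qed
qed

definition lift :: "real \<Rightarrow> real^2 \<Rightarrow> real^3" where
  "lift t v = G t + inner v (F' t) *\<^sub>R G' t + inner v (rot90 (F' t)) *\<^sub>R normal t"

lemma mink_lift:
  assumes "t \<in> {0..T}"
  shows "mink (lift t v) (G t) = -1" "mink (lift t v) (G' t) = inner v (F' t)"
    "mink (lift t v) (normal t) = inner v (rot90 (F' t))"
    "mink (lift t v) (lift t v) = inner v v - 1"
  using lorentz_frame_combination[OF lorentz_frame_G[OF assms]]
    unit_frame_inner_self[OF F'_unit[OF assms], of v]
  by (simp_all add: lift_def normal_def)

lemma lift_inj:
  assumes t: "t \<in> {0..T}" and "lift t v = lift t w"
  shows "v = w"
proof -
  have "inner v (F' t) = inner w (F' t)" "inner v (rot90 (F' t)) = inner w (rot90 (F' t))"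
    using mink_lift(2,3)[OF t, of v] mink_lift(2,3)[OF t, of w] assms(2) by simp_all
  then show ?thesis
    using unit_frame_expansion[OF F'_unit[OF t], of v] unit_frame_expansion[OF F'_unit[OF t], of w]
    by simp
qed

lemma lift_eq_of_parallel:
  assumes "t \<in> {0..T}" "lift t v = \<mu> *\<^sub>R x" "lift t w = \<nu> *\<^sub>R x"
  shows "v = w"
proof -
  have "\<mu> * mink x (G t) = -1" "\<nu> * mink x (G t) = -1"
    using mink_lift(1)[OF assms(1), of v] mink_lift(1)[OF assms(1), of w] assms(2,3)
    by (simp_all add: mink.scaleR_left)
  then have "\<mu> = \<nu>"
    by (metis mult_cancel_right mult_eq_0_iff zero_neq_neg_one)
  then show ?thesis
    using lift_inj[OF assms(1)] assms(2,3) by simp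
qed

lemma rear_track_lift_parallel:
  assumes R: "bicycle_rear F 1 T R"
  shows "\<exists>\<mu>. lift T (R T - F T) = \<mu> *\<^sub>R lift 0 (R 0 - F 0)"
proof -
  have deriv: "((\<lambda>s. lift s (R s - F s)) has_vector_derivative
      inner (R t - F t) (F' t) *\<^sub>R lift t (R t - F t)) (at t within {0..T})" if "t \<in> {0..T}" for t
    using bicycle_equation_frame_combination_scaling[OF rear_track_bicycle_equation[OF R] that]
    by (simp add: lift_def)
  have bound: "inner (R t - F t) (F' t) \<le> 1" if t: "t \<in> {0..T}" for t
  proof -
    have "norm (R t - F t) = 1" "norm (F' t) = 1"
      using R t F'_unit[OF t] unfolding bicycle_rear_def by (auto simp: norm_minus_commute norm_eq_1)
    then show ?thesis
      using norm_cauchy_schwarz[of "R t - F t" "F' t"] by simp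
  qed
  show ?thesis
    using linear_ode_solution_parallel[OF _ deriv bound] T_pos by simp
qed

lemma rear_track_exists:
  assumes "norm p = 1"
  shows "\<exists>R. bicycle_rear F 1 T R \<and> R 0 - F 0 = p"
proof -
  define x where "x = lift 0 p"
  have "mink x x = 0" "mink x (G 0) = -1"
    using mink_lift[OF endpoints_in_domain(1)] assms by (simp_all add: x_def norm_eq_1)
  then have "x \<noteq> 0"
    by (auto simp: mink.zero_left)
  \<comment> \<open>the offsets whose lifts are the multiples of the fixed null vector \<open>x\<close>\<close>
  define v1 where "v1 s = - mink x (G' s) / mink x (G s)" for s
  define v2 where "v2 s = - mink x (normal s) / mink x (G s)" for s
  have "bicycle_rear F 1 T (\<lambda>s. F s + v1 s *\<^sub>R F' s + v2 s *\<^sub>R rot90 (F' s))"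
    using bicycle_equation_rear_track null_vector_bicycle_equation[OF \<open>mink x x = 0\<close> \<open>x \<noteq> 0\<close>]
    unfolding v1_def[abs_def] v2_def[abs_def] by blast
  moreover have "v1 0 *\<^sub>R F' 0 + v2 0 *\<^sub>R rot90 (F' 0) = p"
    using mink_lift[OF endpoints_in_domain(1), of p]
      unit_frame_expansion[OF F'_unit[OF endpoints_in_domain(1)], of p]
    by (simp add: v1_def v2_def x_def)
  ultimately show ?thesis
    by force
qed

lemma bicycle_monodromy_lift:
  assumes "norm p = 1"
  shows "\<exists>\<mu>. lift T (bicycle_monodromy F 1 T p) = \<mu> *\<^sub>R lift 0 p"
proof -
  obtain R where R: "bicycle_rear F 1 T R" and R0: "R 0 - F 0 = p"
    using rear_track_exists[OF assms] by blast
  have "bicycle_monodromy F 1 T p = R T - F T"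
    unfolding bicycle_monodromy_def
  proof (rule the_equality)
    show "\<exists>R'. bicycle_rear F 1 T R' \<and> R' 0 - F 0 = p \<and> R' T - F T = R T - F T"
      using R R0 by blast
    fix q assume "\<exists>R'. bicycle_rear F 1 T R' \<and> R' 0 - F 0 = p \<and> R' T - F T = q"
    then obtain R' where R': "bicycle_rear F 1 T R'" "R' 0 - F 0 = p" "R' T - F T = q"
      by blast
    then show "q = R T - F T"
      using rear_track_lift_parallel[OF R] rear_track_lift_parallel[OF R'(1)] R0
        lift_eq_of_parallel[OF endpoints_in_domain(2)] by metis
  qed
  then show ?thesis
    using rear_track_lift_parallel[OF R] R0 by simp
qed

lemma lift_frame_directions:
  assumes "t \<in> {0..T}"
  shows "lift t (F' t) = G t + G' t" "lift t (- F' t) = G t - G' t"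
    "lift t (rot90 (F' t)) = G t + normal t" "lift t (- rot90 (F' t)) = G t - normal t"
  using F'_unit[OF assms] by (simp_all add: lift_def algebra_simps)

theorem development_closed_iff_monodromy_id:
  assumes F'_closed: "F' T = F' 0"
  shows "(G T = G 0 \<and> G' T = G' 0) \<longleftrightarrow> (\<forall>p. norm p = 1 \<longrightarrow> bicycle_monodromy F 1 T p = p)"
proof
  assume "G T = G 0 \<and> G' T = G' 0"
  then have lift_T: "lift T = lift 0"
    by (simp add: fun_eq_iff lift_def normal_def F'_closed)
  show "\<forall>p. norm p = 1 \<longrightarrow> bicycle_monodromy F 1 T p = p"
  proof (intro allI impI)
    fix p :: "real^2" assume "norm p = 1"
    then obtain \<mu> where "lift 0 (bicycle_monodromy F 1 T p) = \<mu> *\<^sub>R lift 0 p"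
      using bicycle_monodromy_lift lift_T by auto
    then show "bicycle_monodromy F 1 T p = p"
      using lift_eq_of_parallel[OF endpoints_in_domain(1), of _ \<mu> "lift 0 p" p 1] by simp
  qed
next
  assume monodromy_id: "\<forall>p. norm p = 1 \<longrightarrow> bicycle_monodromy F 1 T p = p"
  have parallel: "\<exists>\<mu>. lift T p = \<mu> *\<^sub>R lift 0 p" if "norm p = 1" for p
    using bicycle_monodromy_lift[OF that] monodromy_id that by metis
  have unit: "norm (F' 0) = 1" "norm (rot90 (F' 0)) = 1"
    using F'_unit[OF endpoints_in_domain(1)] by (simp_all add: norm_eq_1)
  note directions = lift_frame_directions[OF endpoints_in_domain(1)]
    lift_frame_directions[OF endpoints_in_domain(2), unfolded F'_closed]
  obtain m1 m2 m3 m4 where "G T + G' T = m1 *\<^sub>R (G 0 + G' 0)" "G T - G' T = m2 *\<^sub>R (G 0 - G' 0)"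
    "G T + normal T = m3 *\<^sub>R (G 0 + normal 0)" "G T - normal T = m4 *\<^sub>R (G 0 - normal 0)"
    using parallel[of "F' 0"] parallel[of "- F' 0"] parallel[of "rot90 (F' 0)"] parallel[of "- rot90 (F' 0)"]
    unfolding directions by (auto simp: unit)
  then show "G T = G 0 \<and> G' T = G' 0"
    using lorentz_frame_eq_of_null_directions[OF lorentz_frame_G[OF endpoints_in_domain(1)]
        mink_G_G[OF endpoints_in_domain(2)]]
      G_in_H2[OF endpoints_in_domain(1)] G_in_H2[OF endpoints_in_domain(2)]
    by (simp add: H2_def normal_def)
qed

end

theorem corollary3p4:
  fixes F :: "real \<Rightarrow> real^2" and G :: "real \<Rightarrow> real^3" and T :: real
  assumes "T > 0"
    and "smooth_curve T F"
    and "\<forall>t\<in>{0..T}. norm (deriv1 T F t) = 1"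
    and "C1_closed T F"
    and "smooth_curve T G"
    and "\<forall>t\<in>{0..T}. G t \<in> H2"
    and "\<forall>t\<in>{0..T}. mink (deriv1 T G t) (deriv1 T G t) = 1"
    and "\<forall>t\<in>{0..T}. geodesic_curvature T G t = signed_curvature T F t"
  shows "C1_closed T G \<longleftrightarrow> (\<forall>p. norm p = 1 \<longrightarrow> bicycle_monodromy F 1 T p = p)"
proof -
  obtain F' F'' where F: "\<And>t. t \<in> {0..T} \<Longrightarrow> (F has_vector_derivative F' t) (at t within {0..T})"
    "\<And>t. t \<in> {0..T} \<Longrightarrow> (F' has_vector_derivative F'' t) (at t within {0..T})"
    "\<And>t. t \<in> {0..T} \<Longrightarrow> deriv1 T F t = F' t" "\<And>t. t \<in> {0..T} \<Longrightarrow> deriv2 T F t = F'' t"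
    using smooth_curve_derivatives[OF assms(1,2)] by blast
  obtain G' G'' where G: "\<And>t. t \<in> {0..T} \<Longrightarrow> (G has_vector_derivative G' t) (at t within {0..T})"
    "\<And>t. t \<in> {0..T} \<Longrightarrow> (G' has_vector_derivative G'' t) (at t within {0..T})"
    "\<And>t. t \<in> {0..T} \<Longrightarrow> deriv1 T G t = G' t" "\<And>t. t \<in> {0..T} \<Longrightarrow> deriv2 T G t = G'' t"
    using smooth_curve_derivatives[OF assms(1,5)] by blast
  interpret development T F F' F'' G G' G''
    by unfold_locales
      (use assms F G in \<open>auto simp: norm_eq_1 geodesic_curvature_def cov_accel_def signed_curvature_def\<close>)
  \<comment> \<open>Only the tangent half of \<open>C1_closed T F\<close> matters: the monodromy sees only \<open>R - F\<close>.\<close>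
  have "F' T = F' 0"
    using assms(4) F(3) endpoints_in_domain unfolding C1_closed_def by simp
  then show ?thesis
    using development_closed_iff_monodromy_id G(3) endpoints_in_domain unfolding C1_closed_def by auto
qed

end
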